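(* Let $(X,d)$ be a metric space, $\mu$ a non-atomic Borel measure on $X$, $m$ a Borel measure on $X$, $0<p<\infty$, and $E\subset X$ a Borel set with $m(E)=0$. Then $\mathrm{Mod}_p(\Gamma_E^+)=0$, where $\Gamma_E^+=\{\gamma\in\Gamma^\mu:\mu(\mathrm{Im}(\gamma)\cap E)>0\}$.
   Context: A path is a continuous map $\gamma:[a,b]\to X$; a subpath is a restriction to a subinterval, trivial if that interval is a point; $\mathrm{Im}(\gamma)=\gamma([a,b])$. $\mu$ non-atomic: $\mu(\{x\})=0$ for all $x$. $\Gamma^\mu$ is the set of all non-trivial injective paths $\gamma$ with $0<\mu(\mathrm{Im}(\tilde\gamma))<\infty$ for every non-trivial subpath $\tilde\gamma$. For Borel $g\ge0$, $\int_\gamma g:=\int_{\mathrm{Im}(\gamma)}g\,d\mu$. For $\Gamma\subset\Gamma^\mu$, $\mathrm{Mod}_p(\Gamma)=\inf\int_Xg^p\,dm$ over Borel $g:X\to[0,\infty]$ with $\int_\gamma g\ge1$ for all $\gamma\in\Gamma$. *)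

theory Defs
  imports "HOL-Analysis.Analysis"
begin

text \<open>A path is represented by a triple (a, b, gamma) standing for the
  restriction of gamma to the parameter interval [a,b] (with a \<le> b).\<close>

type_synonym 'a path_t = "real \<times> real \<times> (real \<Rightarrow> 'a)"

definition is_path :: "'a::topological_space path_t \<Rightarrow> bool" where
  "is_path P \<longleftrightarrow> (case P of (a, b, g) \<Rightarrow> a \<le> b \<and> continuous_on {a..b} g)"

definition path_im :: "'a path_t \<Rightarrow> 'a set" where
  "path_im P = (case P of (a, b, g) \<Rightarrow> g ` {a..b})"

definition non_atomic :: "'a measure \<Rightarrow> bool" where
  "non_atomic M \<longleftrightarrow> (\<forall>x. emeasure M {x} = 0)"

definition Gamma_mu :: "'a::topological_space measure \<Rightarrow> 'a path_t set" where
  "Gamma_mu M = {(a, b, g) | a b g. is_path (a, b, g) \<and> a < b \<and> inj_on g {a..b} \<and>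
      (\<forall>c d. a \<le> c \<and> c < d \<and> d \<le> b \<longrightarrow>
         0 < emeasure M (g ` {c..d}) \<and> emeasure M (g ` {c..d}) < \<infinity>)}"

definition line_int :: "'a measure \<Rightarrow> 'a path_t \<Rightarrow> ('a \<Rightarrow> ennreal) \<Rightarrow> ennreal" where
  "line_int M P g = set_nn_integral M (path_im P) g"

definition enn_powr :: "ennreal \<Rightarrow> real \<Rightarrow> ennreal" where
  "enn_powr x p = (if x = \<infinity> then \<infinity> else ennreal (enn2real x powr p))"

definition Mod_p :: "'a::topological_space measure \<Rightarrow> 'a measure \<Rightarrow> real \<Rightarrow> 'a path_t set \<Rightarrow> ennreal" where
  "Mod_p M m p \<Gamma> = (INF g \<in> {g. g \<in> borel_measurable borel \<and> (\<forall>P\<in>\<Gamma>. line_int M P g \<ge> 1)}.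
       \<integral>\<^sup>+ x. enn_powr (g x) p \<partial>m)"

end

theory Submission
  imports Defs
begin

text \<open>The function that is \<open>\<infinity>\<close> on \<open>E\<close> and \<open>0\<close> elsewhere is admissible for every
  path meeting \<open>E\<close> in positive \<open>\<mu>\<close>-measure, and its \<open>p\<close>-th power integrates to
  \<open>\<infinity> \<cdot> m(E) = 0\<close>.\<close>

lemma path_im_compact:
  assumes "is_path P"
  shows "compact (path_im P)"
  using assms compact_continuous_image[of "{fst P..fst (snd P)}" "snd (snd P)"]
  by (auto simp: is_path_def path_im_def split: prod.splits)

lemma path_im_Int_sets:
  fixes M :: "'a::t2_space measure"
  assumes "sets M = sets borel" and "is_path P" and "E \<in> sets borel"
  shows "path_im P \<inter> E \<in> sets M"
proof -
  have "closed (path_im P)"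
    using assms(2) by (intro compact_imp_closed path_im_compact)
  then show ?thesis
    using assms(1,3) by auto
qed

lemma line_int_infinity_indicator:
  fixes M :: "'a::t2_space measure"
  assumes "sets M = sets borel" and "is_path P" and "E \<in> sets borel"
  shows "line_int M P (\<lambda>x. \<infinity> * indicator E x) = \<infinity> * emeasure M (path_im P \<inter> E)"
proof -
  have "line_int M P (\<lambda>x. \<infinity> * indicator E x) = (\<integral>\<^sup>+x. \<infinity> * indicator (path_im P \<inter> E) x \<partial>M)"
    unfolding line_int_def by (intro nn_integral_cong) (auto simp: indicator_def)
  also have "\<dots> = \<infinity> * emeasure M (path_im P \<inter> E)"
    using path_im_Int_sets[OF assms] by (rule nn_integral_cmult_indicator)
  finally show ?thesis .
qed

lemma Mod_p_le_admissible:
  assumes "g \<in> borel_measurable borel" and "\<And>P. P \<in> \<Gamma> \<Longrightarrow> line_int M P g \<ge> 1"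
  shows "Mod_p M m p \<Gamma> \<le> (\<integral>\<^sup>+ x. enn_powr (g x) p \<partial>m)"
  unfolding Mod_p_def using assms by (intro INF_lower) auto

text \<open>No positivity of \<open>p\<close> is needed here, since \<open>0 powr p = 0\<close> for every real \<open>p\<close>.\<close>

lemma nn_integral_enn_powr_infinity_indicator:
  assumes "E \<in> sets m"
  shows "(\<integral>\<^sup>+ x. enn_powr (\<infinity> * indicator E x) p \<partial>m) = \<infinity> * emeasure m E"
proof -
  have "(\<integral>\<^sup>+ x. enn_powr (\<infinity> * indicator E x) p \<partial>m) = (\<integral>\<^sup>+ x. \<infinity> * indicator E x \<partial>m)"
    by (intro nn_integral_cong) (auto simp: enn_powr_def indicator_def)
  also have "\<dots> = \<infinity> * emeasure m E"
    using assms by (rule nn_integral_cmult_indicator)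
  finally show ?thesis .
qed

theorem lemma3p4:
  fixes \<mu> m :: "'a::metric_space measure" and p :: real and E :: "'a set"
  assumes "sets \<mu> = sets borel" and "non_atomic \<mu>"
    and "sets m = sets borel"
    and "0 < p"
    and "E \<in> sets borel" and "emeasure m E = 0"
  shows "Mod_p \<mu> m p {P \<in> Gamma_mu \<mu>. emeasure \<mu> (path_im P \<inter> E) > 0} = 0"
proof -
  let ?g = "\<lambda>x. \<infinity> * indicator E x :: ennreal"
  have "?g \<in> borel_measurable borel"
    using assms(5) by measurable
  moreover have "line_int \<mu> P ?g \<ge> 1"
    if "P \<in> Gamma_mu \<mu>" and "emeasure \<mu> (path_im P \<inter> E) > 0" for P
  proof -
    have "is_path P"
      using that(1) by (auto simp: Gamma_mu_def)
    then have "line_int \<mu> P ?g = \<infinity> * emeasure \<mu> (path_im P \<inter> E)"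
      by (rule line_int_infinity_indicator[OF assms(1) _ assms(5)])
    also have "\<dots> = \<infinity>"
      using that(2) by (simp add: ennreal_mult_eq_top_iff)
    finally show ?thesis
      by simp
  qed
  ultimately have "Mod_p \<mu> m p {P \<in> Gamma_mu \<mu>. emeasure \<mu> (path_im P \<inter> E) > 0}
      \<le> (\<integral>\<^sup>+ x. enn_powr (?g x) p \<partial>m)"
    by (intro Mod_p_le_admissible) auto
  also have "\<dots> = \<infinity> * emeasure m E"
    using assms(3,5) by (intro nn_integral_enn_powr_infinity_indicator) simp
  also have "\<dots> = 0"
    using assms(6) by simp
  finally show ?thesis
    by simp
qed

end
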